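(* Let $\mathbf{x}_r=(\mathbf{p}_r,\mathbf{n}_r)$ and $\mathbf{x}_i=(\mathbf{p}_i,\mathbf{n}_i)$ be oriented points in $\mathbb{R}^3\times\mathbb{R}^3$ with unit normals $\|\mathbf{n}_r\|=\|\mathbf{n}_i\|=1$ and $\mathbf{p}_r\neq\mathbf{p}_i$, and likewise let $\mathbf{x}_r'=(\mathbf{p}_r',\mathbf{n}_r')$, $\mathbf{x}_i'=(\mathbf{p}_i',\mathbf{n}_i')$ be oriented points with unit normals and $\mathbf{p}_r'\neq\mathbf{p}_i'$. Suppose the two pairs share the same reference point and reference normal, $\mathbf{p}_r=\mathbf{p}_r'=\mathbf{0}$ and $\mathbf{n}_r=\mathbf{n}_r'$. Then $\mathbf{f}(\mathbf{x}_r,\mathbf{x}_i)=\mathbf{f}(\mathbf{x}_r',\mathbf{x}_i')$ if and only if there exists an orthogonal matrix $\mathbf{Q}\in O(3)$ with $\mathbf{Q}\mathbf{n}_r=\mathbf{n}_r$, $\mathbf{Q}\mathbf{n}_i=\mathbf{n}_i'$ and $\mathbf{Q}\mathbf{p}_i=\mathbf{p}_i'$; that is, the point pair feature determines the oriented pair up to a rotation about, or a reflection in a plane containing, the axis spanned by the reference normal $\mathbf{n}_r$.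
   Context: For oriented points $\mathbf{x}_r=(\mathbf{p}_r,\mathbf{n}_r)$, $\mathbf{x}_i=(\mathbf{p}_i,\mathbf{n}_i)$ with $\mathbf{p}_r\ne\mathbf{p}_i$, the point pair feature is $\mathbf{f}(\mathbf{x}_r,\mathbf{x}_i)=(\angle(\mathbf{n}_r,\mathbf{d}),\angle(\mathbf{n}_i,\mathbf{d}),\angle(\mathbf{n}_r,\mathbf{n}_i),\|\mathbf{d}\|_2)\in\mathbb{R}^4$, where $\mathbf{d}=\mathbf{p}_r-\mathbf{p}_i$ and $\angle(\mathbf{u},\mathbf{v})\in[0,\pi]$ denotes the unsigned angle between nonzero vectors $\mathbf{u},\mathbf{v}$. *)

theory Defs
  imports "HOL-Analysis.Analysis"
begin

definition vec_angle :: "real^3 \<Rightarrow> real^3 \<Rightarrow> real" where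
  "vec_angle u v = arccos ((u \<bullet> v) / (norm u * norm v))"

definition ppf :: "(real^3) \<times> (real^3) \<Rightarrow> (real^3) \<times> (real^3) \<Rightarrow> real \<times> real \<times> real \<times> real" where
  "ppf xr xi = (let (pr, nr) = xr; (pi, ni) = xi; d = pr - pi in
     (vec_angle nr d, vec_angle ni d, vec_angle nr ni, norm d))"

end

theory Submission
  imports Defs
begin

text \<open>Since arccos is injective on [-1, 1] and
  the normals have fixed length, the feature of (0, n), (p, m) carries the same information as
  the Gram data n \<bullet> p, m \<bullet> p, n \<bullet> m, norm p, which every orthogonal map fixing n preserves.
  Conversely, configurations with equal Gram data are related by two Householder reflections:
  the one along m - m' fixes n and sends m to m'; if it sends p to p1, the one along p1 - p'
  then fixes n and m' and sends p1 to p'.\<close>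

lemma abs_inner_div_norms_le_1:
  fixes u v :: "'a::real_inner"
  shows "\<bar>(u \<bullet> v) / (norm u * norm v)\<bar> \<le> 1"
proof (cases "u = 0 \<or> v = 0")
  case False
  then have "norm u * norm v > 0" by simp
  with Cauchy_Schwarz_ineq2[of u v] show ?thesis by simp
qed auto

lemma vec_angle_eq_iff:
  "vec_angle u v = vec_angle u' v' \<longleftrightarrow>
     (u \<bullet> v) / (norm u * norm v) = (u' \<bullet> v') / (norm u' * norm v')"
  unfolding vec_angle_def by (intro arccos_eq_iff conjI abs_inner_div_norms_le_1)

lemma ppf_origin:
  "ppf (0, n) (p, m) = (vec_angle n (- p), vec_angle m (- p), vec_angle n m, norm p)"
  by (simp add: ppf_def Let_def)

lemma ppf_origin_eq_iff:
  assumes "norm m = norm m'" "m \<noteq> 0" "p \<noteq> 0" "p' \<noteq> 0"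
  shows "ppf (0, n) (p, m) = ppf (0, n) (p', m') \<longleftrightarrow>
    n \<bullet> p = n \<bullet> p' \<and> m \<bullet> p = m' \<bullet> p' \<and> n \<bullet> m = n \<bullet> m' \<and> norm p = norm p'"
proof (cases "norm p = norm p'")
  case True
  with assms show ?thesis
    by (auto simp: ppf_origin vec_angle_eq_iff)
qed (simp add: ppf_origin)

definition reflect_along :: "'a::real_inner \<Rightarrow> 'a \<Rightarrow> 'a" where
  "reflect_along u x = x - (2 * (u \<bullet> x) / (u \<bullet> u)) *\<^sub>R u"

lemma orthogonal_transformation_reflect_along:
  "orthogonal_transformation (reflect_along u)"
  unfolding orthogonal_transformation_def
proof (intro conjI allI)
  show "linear (reflect_along u)"
    by (rule linearI)
      (simp_all add: reflect_along_def add_divide_distrib algebra_simps)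
next
  fix v w
  show "reflect_along u v \<bullet> reflect_along u w = v \<bullet> w"
    by (cases "u = 0")
      (simp_all add: reflect_along_def inner_diff_left inner_diff_right inner_commute field_simps)
qed

lemma reflect_along_orthogonal: "u \<bullet> v = 0 \<Longrightarrow> reflect_along u v = v"
  by (simp add: reflect_along_def)

lemma reflect_along_diff:
  assumes "norm a = norm b"
  shows "reflect_along (a - b) a = b"
proof (cases "a = b")
  case False
  have "a \<bullet> a = b \<bullet> b"
    using assms by (simp add: dot_square_norm)
  then have "2 * ((a - b) \<bullet> a) = (a - b) \<bullet> (a - b)"
    by (simp add: inner_diff_left inner_diff_right inner_commute)
  moreover have "(a - b) \<bullet> (a - b) \<noteq> 0"
    using False by simp
  ultimately have coeff: "2 * ((a - b) \<bullet> a) / ((a - b) \<bullet> (a - b)) = 1"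
    by (metis divide_self)
  show ?thesis
    unfolding reflect_along_def coeff by simp
qed (simp add: reflect_along_def)

lemma orthogonal_transformation_exists_fixing:
  fixes n m m' p p' :: "'a::real_inner"
  assumes "norm m = norm m'" "norm p = norm p'"
    and "n \<bullet> m = n \<bullet> m'" "n \<bullet> p = n \<bullet> p'" "m \<bullet> p = m' \<bullet> p'"
  obtains f where "orthogonal_transformation f" "f n = n" "f m = m'" "f p = p'"
proof
  define f\<^sub>1 where "f\<^sub>1 = reflect_along (m - m')"
  define p\<^sub>1 where "p\<^sub>1 = f\<^sub>1 p"
  define f\<^sub>2 where "f\<^sub>2 = reflect_along (p\<^sub>1 - p')"
  have orth\<^sub>1: "orthogonal_transformation f\<^sub>1" and orth\<^sub>2: "orthogonal_transformation f\<^sub>2"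
    unfolding f\<^sub>1_def f\<^sub>2_def by (rule orthogonal_transformation_reflect_along)+
  have f\<^sub>1_n: "f\<^sub>1 n = n"
    unfolding f\<^sub>1_def using assms(3)
    by (intro reflect_along_orthogonal) (simp add: inner_diff_left inner_diff_right inner_commute)
  have f\<^sub>1_m: "f\<^sub>1 m = m'"
    unfolding f\<^sub>1_def using assms(1) by (rule reflect_along_diff)
  have inner\<^sub>1: "f\<^sub>1 v \<bullet> f\<^sub>1 w = v \<bullet> w" for v w
    using orth\<^sub>1 by (simp add: orthogonal_transformation_def)
  have "(p\<^sub>1 - p') \<bullet> n = 0"
    using inner\<^sub>1[of p n] assms(4)
    by (simp add: p\<^sub>1_def f\<^sub>1_n inner_diff_left inner_diff_right inner_commute)
  then have f\<^sub>2_n: "f\<^sub>2 n = n"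
    unfolding f\<^sub>2_def by (rule reflect_along_orthogonal)
  have "(p\<^sub>1 - p') \<bullet> m' = 0"
    using inner\<^sub>1[of p m] assms(5)
    by (simp add: p\<^sub>1_def f\<^sub>1_m inner_diff_left inner_diff_right inner_commute)
  then have f\<^sub>2_m': "f\<^sub>2 m' = m'"
    unfolding f\<^sub>2_def by (rule reflect_along_orthogonal)
  have "norm p\<^sub>1 = norm p'"
    using orth\<^sub>1 assms(2) unfolding p\<^sub>1_def by (simp add: orthogonal_transformation_norm)
  then have f\<^sub>2_p\<^sub>1: "f\<^sub>2 p\<^sub>1 = p'"
    unfolding f\<^sub>2_def by (rule reflect_along_diff)
  show "orthogonal_transformation (f\<^sub>2 \<circ> f\<^sub>1)"
    using orth\<^sub>2 orth\<^sub>1 by (rule orthogonal_transformation_compose)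
  show "(f\<^sub>2 \<circ> f\<^sub>1) n = n" "(f\<^sub>2 \<circ> f\<^sub>1) m = m'" "(f\<^sub>2 \<circ> f\<^sub>1) p = p'"
    using f\<^sub>1_n f\<^sub>1_m f\<^sub>2_n f\<^sub>2_m' f\<^sub>2_p\<^sub>1 by (simp_all add: p\<^sub>1_def)
qed

lemma orthogonal_transformation_matrix_vector_mul:
  fixes Q :: "real^'n^'n"
  shows "orthogonal_transformation ((*v) Q) \<longleftrightarrow> orthogonal_matrix Q"
  by (simp add: orthogonal_transformation_matrix)

lemma ex_orthogonal_matrix_fixing_iff:
  fixes n m m' p p' :: "real^'n"
  assumes "norm m = norm m'"
  shows "(\<exists>Q :: real^'n^'n. orthogonal_matrix Q \<and> Q *v n = n \<and> Q *v m = m' \<and> Q *v p = p')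
    \<longleftrightarrow> n \<bullet> p = n \<bullet> p' \<and> m \<bullet> p = m' \<bullet> p' \<and> n \<bullet> m = n \<bullet> m' \<and> norm p = norm p'"
    (is "?orbit \<longleftrightarrow> ?gram")
proof
  assume ?orbit
  then obtain Q :: "real^'n^'n"
    where Q: "orthogonal_matrix Q" "Q *v n = n" "Q *v m = m'" "Q *v p = p'"
    by blast
  then have "orthogonal_transformation ((*v) Q)"
    by (simp add: orthogonal_transformation_matrix_vector_mul)
  then have "(Q *v v) \<bullet> (Q *v w) = v \<bullet> w" and "norm (Q *v v) = norm v" for v w
    by (simp_all add: orthogonal_transformation_def orthogonal_transformation_norm)
  from this(1)[of n p] this(1)[of m p] this(1)[of n m] this(2)[of p] show ?gram
    using Q(2-4) by simp
next
  assume ?gram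
  with assms obtain f
    where f: "orthogonal_transformation f" "f n = n" "f m = m'" "f p = p'"
    using orthogonal_transformation_exists_fixing by metis
  then have "linear f" and "orthogonal_matrix (matrix f)"
    by (simp_all add: orthogonal_transformation_matrix)
  moreover from \<open>linear f\<close> have "matrix f *v x = f x" for x
    by (simp add: matrix_vector_mul(2)[symmetric])
  ultimately show ?orbit
    using f(2-4) by (intro exI[of _ "matrix f"]) simp
qed

theorem proposition1:
  fixes pr pi nr ni pr' pi' nr' ni' :: "real^3"
  assumes "norm nr = 1" and "norm ni = 1" and "pr \<noteq> pi"
    and "norm nr' = 1" and "norm ni' = 1" and "pr' \<noteq> pi'"
    and "pr = 0" and "pr' = 0" and "nr = nr'"
  shows "ppf (pr, nr) (pi, ni) = ppf (pr', nr') (pi', ni') \<longleftrightarrow>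
    (\<exists>Q :: real^3^3. orthogonal_matrix Q \<and> Q *v nr = nr \<and> Q *v ni = ni' \<and> Q *v pi = pi')"
proof -
  have "norm ni = norm ni'" "ni \<noteq> 0" "pi \<noteq> 0" "pi' \<noteq> 0"
    using assms by auto
  then show ?thesis
    using assms(7-9) by (simp add: ppf_origin_eq_iff ex_orthogonal_matrix_fixing_iff)
qed

end
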